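(* Let $G=(\mathcal{V},\mathcal{E})$ be a hypergraph, $P$ a pmf on $\mathcal{V}$, and $L\ge1$ an integer. Then: (i) for all $\ell\in[L+1]$, $0\le\theta^{(\ell)}_{L+1}(G,P)\le I_{L+1}(G,P)$; (ii) $0\le I_{L+1}(G,P)\le H_{L+1}(P)$; moreover $I_{L+1}(G,P)=0$ if and only if no $e\subseteq\mathrm{supp}(P)$ with $2\le|e|\le L+1$ is in $\mathcal{E}$, and $I_{L+1}(G,P)=H_{L+1}(P)$ if and only if every $e\subseteq\mathrm{supp}(P)$ with $2\le|e|\le L+1$ is in $\mathcal{E}$; (iii) for every integer $n\ge2$ and all $\ell\in[L+1]$, $\theta^{(\ell)}_{L+1}(G^n,P^n)=n\,\theta^{(\ell)}_{L+1}(G,P)$, where $P^n(v^n)=\prod_{t\in[n]}P(v_t)$ (in particular $I_{L+1}(G^n,P^n)=nI_{L+1}(G,P)$).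
   Context: Notation: $[j]=\{1,\dots,j\}$, $[i:j]=\{i,\dots,j\}$; $\log$ is base 2. A hypergraph $G=(\mathcal{V},\mathcal{E})$ has a finite vertex set $\mathcal{V}$ and edge set $\mathcal{E}\subseteq 2^{\mathcal{V}}$ with every edge of cardinality at least 2. The $n$th co-normal power $G^n$ has vertex set $\mathcal{V}^n$, and a set $\{v_1^n,\dots,v_k^n\}\subseteq\mathcal{V}^n$ of $k\ge2$ distinct elements is an edge iff for some $t\in[n]$, $\{v_{1t},\dots,v_{kt}\}\in\mathcal{E}$. For $v_{[k]}=(v_1,\dots,v_k)\in\mathcal{V}^k$ let $\sigma(v_{[k]})=\{v_1,\dots,v_k\}$, and for $S\subseteq[k]$, $v_S=(v_j)_{j\in S}$, $P(v_S)=\prod_{j\in S}P(v_j)$. Define $I_{L+1}(G,P):=-\frac1L\log\sum_{v_{[L+1]}\in\mathcal{V}^{L+1}:\,\sigma(v_{[L+1]})\notin\mathcal{E}}P(v_{[L+1]})$, $\theta^{(L+1)}_{L+1}(G,P):=I_{L+1}(G,P)$, and for $\ell\in[L]$, $\theta^{(\ell)}_{L+1}(G,P):=2I_{L+1}(G,P)+\frac1L\log\sum_{v_{[\ell]}\in\mathcal{V}^{\ell}}P(v_{[\ell]})\Big[\sum_{v_{[\ell+1:L+1]}\in\mathcal{V}^{L+1-\ell}:\,\sigma(v_{[L+1]})\notin\mathcal{E}}P(v_{[\ell+1:L+1]})\Big]^2$. The Rényi entropy of order $\alpha\ge2$ (integer) is $H_\alpha(P)=-\frac{1}{\alpha-1}\log\sum_{v}P(v)^\alpha$.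 *)

theory Defs
  imports Complex_Main
begin

definition hypergraph :: "'a set \<Rightarrow> 'a set set \<Rightarrow> bool" where
  "hypergraph V E \<longleftrightarrow> finite V \<and> (\<forall>e\<in>E. e \<subseteq> V \<and> 2 \<le> card e)"

definition pmf_on :: "'a set \<Rightarrow> ('a \<Rightarrow> real) \<Rightarrow> bool" where
  "pmf_on V P \<longleftrightarrow> (\<forall>v\<in>V. 0 \<le> P v) \<and> (\<Sum>v\<in>V. P v) = 1"

definition supp :: "'a set \<Rightarrow> ('a \<Rightarrow> real) \<Rightarrow> 'a set" where
  "supp V P = {v \<in> V. P v > 0}"

definition tuples :: "'a set \<Rightarrow> nat \<Rightarrow> 'a list set" where
  "tuples V k = {xs. set xs \<subseteq> V \<and> length xs = k}"

definition tprob :: "('a \<Rightarrow> real) \<Rightarrow> 'a list \<Rightarrow> real" where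
  "tprob P xs = prod_list (map P xs)"

definition conormal_V :: "'a set \<Rightarrow> nat \<Rightarrow> 'a list set" where
  "conormal_V V n = tuples V n"

definition conormal_E :: "'a set \<Rightarrow> 'a set set \<Rightarrow> nat \<Rightarrow> 'a list set set" where
  "conormal_E V E n = {S. S \<subseteq> tuples V n \<and> 2 \<le> card S \<and>
                          (\<exists>t<n. (\<lambda>xs. xs ! t) ` S \<in> E)}"

definition I_hg :: "nat \<Rightarrow> 'a set \<Rightarrow> 'a set set \<Rightarrow> ('a \<Rightarrow> real) \<Rightarrow> real" where
  "I_hg m V E P = - (1 / real (m - 1)) *
     log 2 (\<Sum>xs\<in>{xs \<in> tuples V m. set xs \<notin> E}. tprob P xs)"

definition theta_hg :: "nat \<Rightarrow> nat \<Rightarrow> 'a set \<Rightarrow> 'a set set \<Rightarrow> ('a \<Rightarrow> real) \<Rightarrow> real" where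
  "theta_hg m l V E P =
     (if l = m then I_hg m V E P
      else 2 * I_hg m V E P + (1 / real (m - 1)) *
        log 2 (\<Sum>xs\<in>tuples V l. tprob P xs *
           (\<Sum>ys\<in>{ys \<in> tuples V (m - l). set (xs @ ys) \<notin> E}. tprob P ys)\<^sup>2))"

definition renyi :: "nat \<Rightarrow> 'a set \<Rightarrow> ('a \<Rightarrow> real) \<Rightarrow> real" where
  "renyi \<alpha> V P = - (1 / real (\<alpha> - 1)) * log 2 (\<Sum>v\<in>V. P v ^ \<alpha>)"

end

theory Submission
  imports Defs
begin

text \<open>Write \<open>S\<close> for the probability that \<open>m = L + 1\<close> independent \<open>P\<close>-samples span no
  edge, and \<open>g(x)\<close> for its conditional probability given the first \<open>l\<close> samples \<open>x\<close>. Then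
  \<open>I = - log S / L\<close> and \<open>\<theta> = (log E[g\<^sup>2] - 2 log S) / L\<close>. As \<open>0 \<le> g \<le> 1\<close> and \<open>E[g] = S\<close>,
  Jensen's inequality gives \<open>S\<^sup>2 \<le> E[g\<^sup>2] \<le> S\<close>, hence (i). Constant tuples span no edge, so
  \<open>\<Sum>\<^sub>v P(v)\<^sup>m \<le> S \<le> 1\<close>, hence (ii); moreover \<open>S = 1\<close> iff no tuple inside the support spans an
  edge, and \<open>S\<close> equals the collision sum iff every non-constant such tuple does. In the co-normal
  power a tuple spans no edge iff none of its \<open>n\<close> coordinate tuples does; since \<open>P\<^sup>n\<close> is a
  product measure, \<open>S\<close> and \<open>E[g\<^sup>2]\<close> become \<open>n\<close>-th powers, hence (iii).\<close>

lemma finite_tuples: "finite V \<Longrightarrow> finite (tuples V k)"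
  unfolding tuples_def by (rule finite_lists_length_eq)

lemma tuples_0: "tuples V 0 = {[]}"
  unfolding tuples_def by auto

lemma tuples_Suc: "tuples V (Suc k) = (\<lambda>(x, xs). x # xs) ` (V \<times> tuples V k)"
  unfolding tuples_def by (auto simp: length_Suc_conv image_iff)

lemma sum_tuples_Suc:
  assumes "finite V"
  shows "(\<Sum>xs\<in>tuples V (Suc k). f xs) = (\<Sum>x\<in>V. \<Sum>xs\<in>tuples V k. f (x # xs))"
proof -
  have "inj_on (\<lambda>(x, xs). x # xs) (V \<times> tuples V k)"
    by (auto simp: inj_on_def)
  then have "(\<Sum>xs\<in>tuples V (Suc k). f xs) = (\<Sum>(x, xs)\<in>V \<times> tuples V k. f (x # xs))"
    unfolding tuples_Suc by (subst sum.reindex) (simp_all add: case_prod_beta)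
  also have "\<dots> = (\<Sum>x\<in>V. \<Sum>xs\<in>tuples V k. f (x # xs))"
    by (rule sum.cartesian_product[symmetric])
  finally show ?thesis .
qed

lemma sum_tuples_add:
  assumes "finite V"
  shows "(\<Sum>zs\<in>tuples V (a + b). f zs) = (\<Sum>xs\<in>tuples V a. \<Sum>ys\<in>tuples V b. f (xs @ ys))"
proof (induction a arbitrary: f)
  case 0
  show ?case by (simp add: tuples_0)
next
  case (Suc a)
  then show ?case
    by (simp add: sum_tuples_Suc[OF assms])
qed

lemma sum_tuples_prod:
  fixes G :: "nat \<Rightarrow> 'a \<Rightarrow> real"
  assumes "finite W"
  shows "(\<Sum>zs\<in>tuples W n. \<Prod>t<n. G t (zs ! t)) = (\<Prod>t<n. \<Sum>w\<in>W. G t w)"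
proof (induction n arbitrary: G)
  case 0
  show ?case by (simp add: tuples_0)
next
  case (Suc n)
  have "(\<Sum>zs\<in>tuples W (Suc n). \<Prod>t<Suc n. G t (zs ! t))
      = (\<Sum>w\<in>W. G 0 w * (\<Sum>zs\<in>tuples W n. \<Prod>t<n. G (Suc t) (zs ! t)))"
    by (simp del: prod.lessThan_Suc
        add: sum_tuples_Suc[OF assms] prod.lessThan_Suc_shift sum_distrib_left)
  also have "\<dots> = (\<Sum>w\<in>W. G 0 w) * (\<Prod>t<n. \<Sum>w\<in>W. G (Suc t) w)"
    using Suc.IH[of "\<lambda>t. G (Suc t)"] by (simp add: sum_distrib_right)
  also have "\<dots> = (\<Prod>t<Suc n. \<Sum>w\<in>W. G t w)"
    by (simp del: prod.lessThan_Suc add: prod.lessThan_Suc_shift)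
  finally show ?case .
qed

text \<open>A tuple \<open>X\<close> of vertices of the \<open>n\<close>-th power is an \<open>m \<times> n\<close> array over \<open>V\<close>;
  \<open>col t X\<close> is its \<open>t\<close>-th coordinate tuple.\<close>

abbreviation col :: "nat \<Rightarrow> 'b list list \<Rightarrow> 'b list" where
  "col t X \<equiv> map (\<lambda>x. x ! t) X"

lemma sum_tuples_columns:
  fixes F :: "nat \<Rightarrow> 'a list \<Rightarrow> real"
  assumes "finite V"
  shows "(\<Sum>X\<in>tuples (tuples V n) m. \<Prod>t<n. F t (col t X)) = (\<Prod>t<n. \<Sum>zs\<in>tuples V m. F t zs)"
proof (induction m arbitrary: F)
  case 0
  show ?case by (simp add: tuples_0)
next
  case (Suc m)
  have "(\<Sum>X\<in>tuples (tuples V n) (Suc m). \<Prod>t<n. F t (col t X))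
      = (\<Sum>x\<in>tuples V n. \<Sum>X\<in>tuples (tuples V n) m. \<Prod>t<n. F t ((x ! t) # col t X))"
    by (simp add: sum_tuples_Suc finite_tuples assms)
  also have "\<dots> = (\<Sum>x\<in>tuples V n. \<Prod>t<n. \<Sum>zs\<in>tuples V m. F t ((x ! t) # zs))"
    using Suc.IH by (intro sum.cong) simp_all
  also have "\<dots> = (\<Prod>t<n. \<Sum>v\<in>V. \<Sum>zs\<in>tuples V m. F t (v # zs))"
    by (rule sum_tuples_prod[OF assms])
  also have "\<dots> = (\<Prod>t<n. \<Sum>zs\<in>tuples V (Suc m). F t zs)"
    by (simp add: sum_tuples_Suc[OF assms])
  finally show ?case .
qed

lemma set_tuples:
  assumes "finite V" and "1 \<le> m"
  shows "set ` tuples V m = {e. e \<subseteq> V \<and> e \<noteq> {} \<and> card e \<le> m}"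
proof (intro equalityI subsetI)
  fix e assume "e \<in> set ` tuples V m"
  then obtain xs where "e = set xs" "set xs \<subseteq> V" "length xs = m"
    by (auto simp: tuples_def)
  then show "e \<in> {e. e \<subseteq> V \<and> e \<noteq> {} \<and> card e \<le> m}"
    using assms(2) card_length[of xs] by auto
next
  fix e assume e: "e \<in> {e. e \<subseteq> V \<and> e \<noteq> {} \<and> card e \<le> m}"
  then have "finite e"
    using assms(1) finite_subset by blast
  then obtain ys where ys: "set ys = e" "distinct ys"
    using finite_distinct_list by blast
  with e have "hd ys \<in> e" "length ys = card e"
    using hd_in_set[of ys]
    by (auto simp: distinct_card)
  define xs where "xs = ys @ replicate (m - card e) (hd ys)"
  have "set xs = e" "length xs = m"
    using ys \<open>hd ys \<in> e\<close> \<open>length ys = card e\<close> e by (auto simp: xs_def)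
  then show "e \<in> set ` tuples V m"
    using e by (auto simp: tuples_def)
qed

lemma constant_tuples:
  assumes "1 \<le> m"
  shows "{xs \<in> tuples V m. card (set xs) < 2} = (\<lambda>v. replicate m v) ` V"
proof (intro equalityI subsetI)
  fix xs assume xs: "xs \<in> {xs \<in> tuples V m. card (set xs) < 2}"
  then have "length xs = m" "set xs \<subseteq> V" "set xs \<noteq> {}"
    using assms by (auto simp: tuples_def)
  with xs obtain v where "set xs = {v}"
    by (metis (no_types, lifting) One_nat_def card_1_singletonE card_0_eq finite_set
        less_2_cases mem_Collect_eq)
  then have "xs = replicate m v"
    using \<open>length xs = m\<close> by (metis replicate_length_same singletonD)
  then show "xs \<in> (\<lambda>v. replicate m v) ` V"
    using \<open>set xs = {v}\<close> \<open>set xs \<subseteq> V\<close> by auto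
qed (use assms in \<open>auto simp: tuples_def\<close>)

lemma tprob_append: "tprob P (xs @ ys) = tprob P xs * tprob P ys"
  by (simp add: tprob_def)

lemma tprob_nonneg: "pmf_on V P \<Longrightarrow> xs \<in> tuples V k \<Longrightarrow> 0 \<le> tprob P xs"
  unfolding tprob_def pmf_on_def tuples_def by (force intro!: prod_list_nonneg)

lemma tprob_eq_0_iff:
  assumes "pmf_on V P" and "xs \<in> tuples V k"
  shows "tprob P xs = 0 \<longleftrightarrow> \<not> set xs \<subseteq> supp V P"
  using assms unfolding tprob_def supp_def pmf_on_def tuples_def
  by (auto simp: prod_list_zero_iff less_eq_real_def subset_iff)

lemma sum_tprob_tuples:
  assumes "finite V" and "pmf_on V P"
  shows "(\<Sum>xs\<in>tuples V k. tprob P xs) = 1"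
proof (induction k)
  case 0
  show ?case by (simp add: tuples_0 tprob_def)
next
  case (Suc k)
  then show ?case
    using assms by (simp add: sum_tuples_Suc tprob_def sum_distrib_left[symmetric] pmf_on_def)
qed

lemma tprob_conv_prod_nth: "tprob P xs = (\<Prod>t<length xs. P (xs ! t))"
  by (induction xs) (simp_all del: prod.lessThan_Suc add: tprob_def prod.lessThan_Suc_shift)

lemma tprob_columns:
  "\<forall>x\<in>set X. length x = n \<Longrightarrow> tprob (tprob P) X = (\<Prod>t<n. tprob P (col t X))"
proof (induction X)
  case Nil
  show ?case by (simp add: tprob_def)
next
  case (Cons x X)
  have "tprob P x = (\<Prod>t<n. P (x ! t))"
    using Cons.prems by (simp add: tprob_conv_prod_nth)
  with Cons show ?case
    by (simp add: tprob_def prod.distrib)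
qed

lemma weighted_sq_mean_le:
  fixes p g :: "'a \<Rightarrow> real"
  assumes "finite A" and "\<forall>x\<in>A. 0 \<le> p x" and "(\<Sum>x\<in>A. p x) = 1"
  shows "(\<Sum>x\<in>A. p x * g x)\<^sup>2 \<le> (\<Sum>x\<in>A. p x * (g x)\<^sup>2)"
proof -
  define \<mu> where "\<mu> = (\<Sum>x\<in>A. p x * g x)"
  have "0 \<le> (\<Sum>x\<in>A. p x * (g x - \<mu>)\<^sup>2)"
    using assms by (intro sum_nonneg) auto
  also have "\<dots> = (\<Sum>x\<in>A. p x * (g x)\<^sup>2) - 2 * \<mu> * (\<Sum>x\<in>A. p x * g x) + \<mu>\<^sup>2 * (\<Sum>x\<in>A. p x)"
    by (simp add: power2_diff algebra_simps sum.distrib sum_subtractf sum_distrib_left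
        sum_distrib_right)
  finally show ?thesis
    using assms(3) by (simp add: \<mu>_def power2_eq_square)
qed

subsection \<open>The non-edge probability and its conditional second moment\<close>

definition nonedge :: "'b set set \<Rightarrow> 'b list \<Rightarrow> real" where
  "nonedge E xs = (if set xs \<notin> E then 1 else 0)"

definition nonedge_prob :: "nat \<Rightarrow> 'a set \<Rightarrow> 'a set set \<Rightarrow> ('a \<Rightarrow> real) \<Rightarrow> real" where
  "nonedge_prob m V E P = (\<Sum>xs\<in>tuples V m. tprob P xs * nonedge E xs)"

definition cond_nonedge_prob ::
    "nat \<Rightarrow> nat \<Rightarrow> 'a set \<Rightarrow> 'a set set \<Rightarrow> ('a \<Rightarrow> real) \<Rightarrow> 'a list \<Rightarrow> real" where
  "cond_nonedge_prob m l V E P xs = (\<Sum>ys\<in>tuples V (m - l). tprob P ys * nonedge E (xs @ ys))"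

definition cond_nonedge_moment2 :: "nat \<Rightarrow> nat \<Rightarrow> 'a set \<Rightarrow> 'a set set \<Rightarrow> ('a \<Rightarrow> real) \<Rightarrow> real" where
  "cond_nonedge_moment2 m l V E P =
     (\<Sum>xs\<in>tuples V l. tprob P xs * (cond_nonedge_prob m l V E P xs)\<^sup>2)"

lemma I_hg_eq: "finite V \<Longrightarrow> I_hg m V E P = - log 2 (nonedge_prob m V E P) / real (m - 1)"
  unfolding I_hg_def nonedge_prob_def nonedge_def
  by (simp add: sum.inter_filter finite_tuples if_distrib cong: if_cong)

lemma theta_hg_eq:
  "finite V \<Longrightarrow> l \<noteq> m \<Longrightarrow> theta_hg m l V E P =
     (log 2 (cond_nonedge_moment2 m l V E P) - 2 * log 2 (nonedge_prob m V E P)) / real (m - 1)"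
  unfolding theta_hg_def I_hg_eq cond_nonedge_moment2_def cond_nonedge_prob_def
  unfolding nonedge_prob_def nonedge_def
  by (simp add: sum.inter_filter finite_tuples if_distrib diff_divide_distrib cong: if_cong)

lemma nonedge_bounds: "0 \<le> nonedge E xs" "nonedge E xs \<le> 1"
  by (auto simp: nonedge_def)

lemma tprob_nonedge_eq_0_iff:
  assumes "pmf_on V P" and "xs \<in> tuples V k"
  shows "tprob P xs * nonedge E xs = 0 \<longleftrightarrow> (set xs \<subseteq> supp V P \<longrightarrow> set xs \<in> E)"
  using tprob_eq_0_iff[OF assms] by (auto simp: nonedge_def)

lemma collision_prob_pos:
  assumes "finite V" and "pmf_on V P"
  shows "0 < (\<Sum>v\<in>V. P v ^ m)"
proof -
  have "\<exists>v\<in>V. P v \<noteq> 0"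
  proof (rule ccontr)
    assume "\<not> (\<exists>v\<in>V. P v \<noteq> 0)"
    then have "(\<Sum>v\<in>V. P v) = 0"
      by simp
    with assms(2) show False
      by (simp add: pmf_on_def)
  qed
  then obtain v where v: "v \<in> V" "P v \<noteq> 0" ..
  have nonneg: "0 \<le> P x" if "x \<in> V" for x
    using that assms(2) by (simp add: pmf_on_def)
  have "0 < P v ^ m"
    using v nonneg[of v] by simp
  also have "\<dots> \<le> (\<Sum>v\<in>V. P v ^ m)"
    using v assms(1) nonneg by (intro member_le_sum) simp_all
  finally show ?thesis .
qed

lemma sum_constant_tuples_nonedge:
  assumes "hypergraph V E" and "1 \<le> m"
  shows "(\<Sum>xs\<in>(\<lambda>v. replicate m v) ` V. tprob P xs * nonedge E xs) = (\<Sum>v\<in>V. P v ^ m)"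
proof -
  have "inj_on (\<lambda>v. replicate m v) V"
    using assms(2) by (auto simp: inj_on_def)
  moreover have "nonedge E (replicate m v) = 1" for v
    using assms by (auto simp: nonedge_def hypergraph_def)
  ultimately show ?thesis
    by (simp add: sum.reindex tprob_def)
qed

lemma nonedge_prob_split:
  assumes "hypergraph V E" and "1 \<le> m"
  shows "nonedge_prob m V E P = (\<Sum>v\<in>V. P v ^ m)
           + (\<Sum>xs\<in>{xs \<in> tuples V m. 2 \<le> card (set xs)}. tprob P xs * nonedge E xs)"
proof -
  let ?R = "(\<lambda>v. replicate m v) ` V"
  have "finite (tuples V m)"
    using assms(1) by (simp add: finite_tuples hypergraph_def)
  moreover have "?R \<subseteq> tuples V m"
    by (auto simp: tuples_def)
  moreover have "tuples V m - ?R = {xs \<in> tuples V m. 2 \<le> card (set xs)}"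
  proof -
    have "xs \<in> ?R \<longleftrightarrow> card (set xs) < 2" if "xs \<in> tuples V m" for xs
      using that constant_tuples[OF assms(2), of V] by blast
    then show ?thesis
      using assms(2) by (auto simp: not_less)
  qed
  ultimately show ?thesis
    unfolding nonedge_prob_def
    using sum.subset_diff[of ?R "tuples V m" "\<lambda>xs. tprob P xs * nonedge E xs"]
      sum_constant_tuples_nonedge[OF assms] by simp
qed

lemma collision_prob_le_nonedge_prob:
  assumes "hypergraph V E" and "pmf_on V P" and "1 \<le> m"
  shows "(\<Sum>v\<in>V. P v ^ m) \<le> nonedge_prob m V E P"
  unfolding nonedge_prob_split[OF assms(1,3)]
  by (intro add_increasing2 sum_nonneg mult_nonneg_nonneg)
    (auto intro: tprob_nonneg[OF assms(2)] nonedge_bounds)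

lemma nonedge_prob_pos:
  assumes "hypergraph V E" and "pmf_on V P" and "1 \<le> m"
  shows "0 < nonedge_prob m V E P"
  using collision_prob_pos[of V P m] collision_prob_le_nonedge_prob[OF assms] assms(1)
  by (simp add: hypergraph_def assms(2))

lemma nonedge_prob_le_1:
  assumes "finite V" and "pmf_on V P"
  shows "nonedge_prob m V E P \<le> 1"
proof -
  have "nonedge_prob m V E P \<le> (\<Sum>xs\<in>tuples V m. tprob P xs)"
    unfolding nonedge_prob_def
    by (intro sum_mono mult_left_le) (auto intro: tprob_nonneg[OF assms(2)] nonedge_bounds)
  then show ?thesis
    using sum_tprob_tuples[OF assms] by simp
qed

lemma cond_nonedge_prob_bounds:
  assumes "finite V" and "pmf_on V P"
  shows "0 \<le> cond_nonedge_prob m l V E P xs" and "cond_nonedge_prob m l V E P xs \<le> 1"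
proof -
  show "0 \<le> cond_nonedge_prob m l V E P xs"
    unfolding cond_nonedge_prob_def
    by (intro sum_nonneg mult_nonneg_nonneg) (auto intro: tprob_nonneg[OF assms(2)] nonedge_bounds)
  have "cond_nonedge_prob m l V E P xs \<le> (\<Sum>ys\<in>tuples V (m - l). tprob P ys)"
    unfolding cond_nonedge_prob_def
    by (intro sum_mono mult_left_le) (auto intro: tprob_nonneg[OF assms(2)] nonedge_bounds)
  then show "cond_nonedge_prob m l V E P xs \<le> 1"
    using sum_tprob_tuples[OF assms] by simp
qed

lemma sum_cond_nonedge_prob:
  assumes "finite V" and "l \<le> m"
  shows "(\<Sum>xs\<in>tuples V l. tprob P xs * cond_nonedge_prob m l V E P xs) = nonedge_prob m V E P"
proof -
  have "nonedge_prob m V E P = (\<Sum>zs\<in>tuples V (l + (m - l)). tprob P zs * nonedge E zs)"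
    using assms(2) by (simp add: nonedge_prob_def)
  also have "\<dots> = (\<Sum>xs\<in>tuples V l. tprob P xs * cond_nonedge_prob m l V E P xs)"
    by (simp add: sum_tuples_add[OF assms(1)] cond_nonedge_prob_def tprob_append
        sum_distrib_left mult.assoc)
  finally show ?thesis ..
qed

lemma nonedge_prob_sq_le_cond_nonedge_moment2:
  assumes "finite V" and "pmf_on V P" and "l \<le> m"
  shows "(nonedge_prob m V E P)\<^sup>2 \<le> cond_nonedge_moment2 m l V E P"
  using weighted_sq_mean_le[OF finite_tuples[OF assms(1)] _ sum_tprob_tuples[OF assms(1,2)]]
    tprob_nonneg[OF assms(2)]
  unfolding cond_nonedge_moment2_def sum_cond_nonedge_prob[OF assms(1,3), symmetric]
  by blast

lemma cond_nonedge_moment2_le_nonedge_prob: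
  assumes "finite V" and "pmf_on V P" and "l \<le> m"
  shows "cond_nonedge_moment2 m l V E P \<le> nonedge_prob m V E P"
  unfolding cond_nonedge_moment2_def sum_cond_nonedge_prob[OF assms(1,3), symmetric]
proof (rule sum_mono)
  fix xs assume "xs \<in> tuples V l"
  moreover have "(cond_nonedge_prob m l V E P xs)\<^sup>2 \<le> cond_nonedge_prob m l V E P xs"
    using cond_nonedge_prob_bounds[OF assms(1,2)] by (simp add: power2_eq_square mult_left_le)
  ultimately show "tprob P xs * (cond_nonedge_prob m l V E P xs)\<^sup>2
      \<le> tprob P xs * cond_nonedge_prob m l V E P xs"
    using tprob_nonneg[OF assms(2)] by (simp add: mult_left_mono)
qed

lemma nonedge_prob_eq_1_iff:
  assumes "hypergraph V E" and "pmf_on V P" and "1 \<le> m"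
  shows "nonedge_prob m V E P = 1 \<longleftrightarrow>
           \<not> (\<exists>e. e \<subseteq> supp V P \<and> 2 \<le> card e \<and> card e \<le> m \<and> e \<in> E)"
proof -
  have fin: "finite V"
    using assms(1) by (simp add: hypergraph_def)
  have "nonedge_prob m V E P = 1 \<longleftrightarrow> (\<Sum>xs\<in>tuples V m. tprob P xs * (1 - nonedge E xs)) = 0"
    using sum_tprob_tuples[OF fin assms(2), of m]
    by (simp add: nonedge_prob_def right_diff_distrib sum_subtractf)
  also have "\<dots> \<longleftrightarrow> (\<forall>xs\<in>tuples V m. tprob P xs * (1 - nonedge E xs) = 0)"
    by (intro sum_nonneg_eq_0_iff finite_tuples fin mult_nonneg_nonneg)
      (auto intro: tprob_nonneg[OF assms(2)] simp: nonedge_def)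
  also have "\<dots> \<longleftrightarrow> (\<forall>xs\<in>tuples V m. set xs \<in> E \<longrightarrow> \<not> set xs \<subseteq> supp V P)"
    using tprob_eq_0_iff[OF assms(2), of _ m] by (auto simp: nonedge_def)
  also have "\<dots> \<longleftrightarrow> (\<forall>e\<in>set ` tuples V m. e \<in> E \<longrightarrow> \<not> e \<subseteq> supp V P)"
    by simp
  also have "\<dots> \<longleftrightarrow> \<not> (\<exists>e. e \<subseteq> supp V P \<and> 2 \<le> card e \<and> card e \<le> m \<and> e \<in> E)"
  proof -
    have "supp V P \<subseteq> V" "\<And>e. 2 \<le> card e \<Longrightarrow> e \<noteq> {}" "\<And>e. e \<in> E \<Longrightarrow> 2 \<le> card e"
      using assms(1) by (auto simp: supp_def hypergraph_def)
    then show ?thesis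
      unfolding set_tuples[OF fin assms(3)] by blast
  qed
  finally show ?thesis .
qed

lemma nonedge_prob_eq_collision_prob_iff:
  assumes "hypergraph V E" and "pmf_on V P" and "1 \<le> m"
  shows "nonedge_prob m V E P = (\<Sum>v\<in>V. P v ^ m) \<longleftrightarrow>
           (\<forall>e. e \<subseteq> supp V P \<and> 2 \<le> card e \<and> card e \<le> m \<longrightarrow> e \<in> E)"
proof -
  have fin: "finite V"
    using assms(1) by (simp add: hypergraph_def)
  have "nonedge_prob m V E P = (\<Sum>v\<in>V. P v ^ m) \<longleftrightarrow>
      (\<Sum>xs\<in>{xs \<in> tuples V m. 2 \<le> card (set xs)}. tprob P xs * nonedge E xs) = 0"
    unfolding nonedge_prob_split[OF assms(1,3)] by simp
  also have "\<dots> \<longleftrightarrow>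
      (\<forall>xs\<in>tuples V m. 2 \<le> card (set xs) \<longrightarrow> set xs \<subseteq> supp V P \<longrightarrow> set xs \<in> E)"
    using tprob_nonedge_eq_0_iff[OF assms(2), of _ m E]
    by (subst sum_nonneg_eq_0_iff)
      (auto simp: finite_tuples fin intro!: mult_nonneg_nonneg tprob_nonneg[OF assms(2)] nonedge_bounds)
  also have "\<dots> \<longleftrightarrow> (\<forall>e\<in>set ` tuples V m. 2 \<le> card e \<longrightarrow> e \<subseteq> supp V P \<longrightarrow> e \<in> E)"
    by simp
  also have "\<dots> \<longleftrightarrow> (\<forall>e. e \<subseteq> supp V P \<and> 2 \<le> card e \<and> card e \<le> m \<longrightarrow> e \<in> E)"
  proof -
    have "supp V P \<subseteq> V" "\<And>e. 2 \<le> card e \<Longrightarrow> e \<noteq> {}"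
      by (auto simp: supp_def)
    then show ?thesis
      unfolding set_tuples[OF fin assms(3)] by blast
  qed
  finally show ?thesis .
qed

subsection \<open>Co-normal powers\<close>

lemma conormal_E_iff:
  assumes "hypergraph V E" and "set X \<subseteq> tuples V n"
  shows "set X \<in> conormal_E V E n \<longleftrightarrow> (\<exists>t<n. set (col t X) \<in> E)"
proof
  assume "\<exists>t<n. set (col t X) \<in> E"
  then obtain t where t: "t < n" "set (col t X) \<in> E"
    by blast
  then have "2 \<le> card (set (col t X))"
    using assms(1) by (simp add: hypergraph_def)
  also have "\<dots> \<le> card (set X)"
    by (simp add: card_image_le)
  finally show "set X \<in> conormal_E V E n"
    using t assms(2) by (auto simp: conormal_E_def)
qed (auto simp: conormal_E_def)

lemma nonedge_conormal:
  assumes "hypergraph V E" and "set X \<subseteq> tuples V n"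
  shows "nonedge (conormal_E V E n) X = (\<Prod>t<n. nonedge E (col t X))"
  using conormal_E_iff[OF assms] by (auto simp: nonedge_def)

lemma set_subset_tuples: "X \<in> tuples W k \<Longrightarrow> set X \<subseteq> W"
  by (simp add: tuples_def)

lemma tprob_columns_tuples:
  "X \<in> tuples (tuples V n) k \<Longrightarrow> tprob (tprob P) X = (\<Prod>t<n. tprob P (col t X))"
  by (rule tprob_columns) (auto simp: tuples_def)

lemma nonedge_prob_conormal:
  assumes "hypergraph V E"
  shows "nonedge_prob m (tuples V n) (conormal_E V E n) (tprob P) = (nonedge_prob m V E P) ^ n"
proof -
  have "nonedge_prob m (tuples V n) (conormal_E V E n) (tprob P)
      = (\<Sum>X\<in>tuples (tuples V n) m. \<Prod>t<n. tprob P (col t X) * nonedge E (col t X))"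
    unfolding nonedge_prob_def
  proof (intro sum.cong refl)
    fix X assume "X \<in> tuples (tuples V n) m"
    then show "tprob (tprob P) X * nonedge (conormal_E V E n) X
        = (\<Prod>t<n. tprob P (col t X) * nonedge E (col t X))"
      by (simp add: tprob_columns_tuples nonedge_conormal[OF assms set_subset_tuples] prod.distrib)
  qed
  also have "\<dots> = (\<Prod>t<n. nonedge_prob m V E P)"
    unfolding nonedge_prob_def
    using assms by (intro sum_tuples_columns) (simp add: hypergraph_def)
  finally show ?thesis
    by simp
qed

lemma cond_nonedge_prob_conormal:
  assumes "hypergraph V E" and "set X \<subseteq> tuples V n"
  shows "cond_nonedge_prob m l (tuples V n) (conormal_E V E n) (tprob P) X
           = (\<Prod>t<n. cond_nonedge_prob m l V E P (col t X))"
proof -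
  have "cond_nonedge_prob m l (tuples V n) (conormal_E V E n) (tprob P) X
      = (\<Sum>Y\<in>tuples (tuples V n) (m - l).
           \<Prod>t<n. tprob P (col t Y) * nonedge E (col t X @ col t Y))"
    unfolding cond_nonedge_prob_def
  proof (intro sum.cong refl)
    fix Y assume Y: "Y \<in> tuples (tuples V n) (m - l)"
    then have "set (X @ Y) \<subseteq> tuples V n"
      using assms(2) set_subset_tuples[OF Y] by auto
    with Y show "tprob (tprob P) Y * nonedge (conormal_E V E n) (X @ Y)
        = (\<Prod>t<n. tprob P (col t Y) * nonedge E (col t X @ col t Y))"
      by (simp add: tprob_columns_tuples nonedge_conormal[OF assms(1)] prod.distrib)
  qed
  also have "\<dots> = (\<Prod>t<n. cond_nonedge_prob m l V E P (col t X))"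
    unfolding cond_nonedge_prob_def
    using assms(1) by (intro sum_tuples_columns) (simp add: hypergraph_def)
  finally show ?thesis .
qed

lemma cond_nonedge_moment2_conormal:
  assumes "hypergraph V E"
  shows "cond_nonedge_moment2 m l (tuples V n) (conormal_E V E n) (tprob P)
           = (cond_nonedge_moment2 m l V E P) ^ n"
proof -
  have "cond_nonedge_moment2 m l (tuples V n) (conormal_E V E n) (tprob P)
      = (\<Sum>X\<in>tuples (tuples V n) l.
           \<Prod>t<n. tprob P (col t X) * (cond_nonedge_prob m l V E P (col t X))\<^sup>2)"
    unfolding cond_nonedge_moment2_def
  proof (intro sum.cong refl)
    fix X assume "X \<in> tuples (tuples V n) l"
    then show "tprob (tprob P) X * (cond_nonedge_prob m l (tuples V n) (conormal_E V E n) (tprob P) X)\<^sup>2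
        = (\<Prod>t<n. tprob P (col t X) * (cond_nonedge_prob m l V E P (col t X))\<^sup>2)"
      by (simp add: tprob_columns_tuples cond_nonedge_prob_conormal[OF assms set_subset_tuples]
          prod.distrib prod_power_distrib)
  qed
  also have "\<dots> = (\<Prod>t<n. cond_nonedge_moment2 m l V E P)"
    unfolding cond_nonedge_moment2_def
    using assms by (intro sum_tuples_columns) (simp add: hypergraph_def)
  finally show ?thesis
    by simp
qed

lemma log2_eq_iff: "0 < x \<Longrightarrow> 0 < y \<Longrightarrow> log 2 x = log 2 y \<longleftrightarrow> x = y"
  by (simp add: order_eq_iff)

lemma I_hg_bounds:
  assumes "hypergraph V E" and "pmf_on V P" and "2 \<le> m"
  shows "0 \<le> I_hg m V E P \<and> I_hg m V E P \<le> renyi m V P"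
proof -
  have fin: "finite V"
    using assms(1) by (simp add: hypergraph_def)
  have "0 < (\<Sum>v\<in>V. P v ^ m)" "(\<Sum>v\<in>V. P v ^ m) \<le> nonedge_prob m V E P"
    "nonedge_prob m V E P \<le> 1"
    using collision_prob_pos[OF fin assms(2)] collision_prob_le_nonedge_prob[OF assms(1,2)]
      nonedge_prob_le_1[OF fin assms(2)] assms(3) by simp_all
  then have "log 2 (\<Sum>v\<in>V. P v ^ m) \<le> log 2 (nonedge_prob m V E P)"
    "log 2 (nonedge_prob m V E P) \<le> 0"
    by simp_all
  moreover have "0 < real (m - 1)"
    using assms(3) by simp
  ultimately show ?thesis
    unfolding I_hg_eq[OF fin] renyi_def by (simp add: divide_right_mono divide_nonpos_pos)
qed

lemma theta_hg_bounds:
  assumes "hypergraph V E" and "pmf_on V P" and "2 \<le> m" and "l \<le> m"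
  shows "0 \<le> theta_hg m l V E P \<and> theta_hg m l V E P \<le> I_hg m V E P"
proof (cases "l = m")
  case True
  then show ?thesis
    using I_hg_bounds[OF assms(1-3)] by (simp add: theta_hg_def)
next
  case False
  have fin: "finite V"
    using assms(1) by (simp add: hypergraph_def)
  let ?S = "nonedge_prob m V E P" and ?Q = "cond_nonedge_moment2 m l V E P"
  have S_pos: "0 < ?S"
    using nonedge_prob_pos[OF assms(1,2)] assms(3) by simp
  have Q_bounds: "?S\<^sup>2 \<le> ?Q" "?Q \<le> ?S"
    using nonedge_prob_sq_le_cond_nonedge_moment2[OF fin assms(2,4)] cond_nonedge_moment2_le_nonedge_prob[OF fin assms(2,4)] .
  with S_pos have "0 < ?Q"
    by (meson less_le_trans zero_less_power)
  have "2 * log 2 ?S = log 2 (?S\<^sup>2)"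
    using S_pos by (simp add: log_nat_power)
  also have "\<dots> \<le> log 2 ?Q"
    using S_pos Q_bounds(1) \<open>0 < ?Q\<close> by simp
  finally have "2 * log 2 ?S \<le> log 2 ?Q" .
  moreover have "log 2 ?Q \<le> log 2 ?S"
    using S_pos Q_bounds(2) \<open>0 < ?Q\<close> by simp
  moreover have "0 < real (m - 1)"
    using assms(3) by simp
  ultimately show ?thesis
    unfolding theta_hg_eq[OF fin False] I_hg_eq[OF fin]
    by (intro conjI divide_nonneg_pos divide_right_mono) simp_all
qed

lemma I_hg_eq_0_iff:
  assumes "hypergraph V E" and "pmf_on V P" and "2 \<le> m"
  shows "I_hg m V E P = 0 \<longleftrightarrow>
           \<not> (\<exists>e. e \<subseteq> supp V P \<and> 2 \<le> card e \<and> card e \<le> m \<and> e \<in> E)"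
proof -
  have fin: "finite V"
    using assms(1) by (simp add: hypergraph_def)
  have "0 < nonedge_prob m V E P" "0 < real (m - 1)"
    using nonedge_prob_pos[OF assms(1,2)] assms(3) by simp_all
  then have "I_hg m V E P = 0 \<longleftrightarrow> nonedge_prob m V E P = 1"
    using log2_eq_iff[of "nonedge_prob m V E P" 1] by (simp add: I_hg_eq[OF fin])
  then show ?thesis
    using nonedge_prob_eq_1_iff[OF assms(1,2)] assms(3) by simp
qed

lemma I_hg_eq_renyi_iff:
  assumes "hypergraph V E" and "pmf_on V P" and "2 \<le> m"
  shows "I_hg m V E P = renyi m V P \<longleftrightarrow>
           (\<forall>e. e \<subseteq> supp V P \<and> 2 \<le> card e \<and> card e \<le> m \<longrightarrow> e \<in> E)"
proof -
  have fin: "finite V"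
    using assms(1) by (simp add: hypergraph_def)
  have "0 < nonedge_prob m V E P" "0 < (\<Sum>v\<in>V. P v ^ m)" "0 < real (m - 1)"
    using nonedge_prob_pos[OF assms(1,2)] collision_prob_pos[OF fin assms(2)] assms(3)
    by simp_all
  then have "I_hg m V E P = renyi m V P \<longleftrightarrow> nonedge_prob m V E P = (\<Sum>v\<in>V. P v ^ m)"
    using log2_eq_iff[of "nonedge_prob m V E P" "\<Sum>v\<in>V. P v ^ m"]
    by (simp add: I_hg_eq[OF fin] renyi_def field_simps)
  then show ?thesis
    using nonedge_prob_eq_collision_prob_iff[OF assms(1,2)] assms(3) by simp
qed

lemma theta_hg_conormal:
  assumes "hypergraph V E" and "pmf_on V P" and "2 \<le> m" and "l \<le> m"
  shows "theta_hg m l (conormal_V V n) (conormal_E V E n) (tprob P) = real n * theta_hg m l V E P"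
proof -
  have fin: "finite V" and fin_n: "finite (tuples V n)"
    using assms(1) by (simp_all add: hypergraph_def finite_tuples)
  let ?S = "nonedge_prob m V E P" and ?Q = "cond_nonedge_moment2 m l V E P"
  have "0 < ?S"
    using nonedge_prob_pos[OF assms(1,2)] assms(3) by simp
  moreover have "?S\<^sup>2 \<le> ?Q"
    by (rule nonedge_prob_sq_le_cond_nonedge_moment2[OF fin assms(2,4)])
  ultimately have "0 < ?Q"
    by (meson less_le_trans zero_less_power)
  have I_power: "I_hg m (tuples V n) (conormal_E V E n) (tprob P) = real n * I_hg m V E P"
    using \<open>0 < ?S\<close>
    by (simp add: I_hg_eq fin fin_n nonedge_prob_conormal[OF assms(1)] log_nat_power)
  show ?thesis
  proof (cases "l = m")
    case True
    then show ?thesis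
      using I_power by (simp add: theta_hg_def conormal_V_def)
  next
    case False
    then show ?thesis
      using \<open>0 < ?S\<close> \<open>0 < ?Q\<close> unfolding conormal_V_def theta_hg_eq[OF fin_n False]
      by (simp add: theta_hg_eq[OF fin False] nonedge_prob_conormal[OF assms(1)]
          cond_nonedge_moment2_conormal[OF assms(1)] log_nat_power field_simps)
  qed
qed

theorem proposition3:
  fixes V :: "'a set" and E :: "'a set set" and P :: "'a \<Rightarrow> real" and L :: nat
  assumes hg: "hypergraph V E" and pm: "pmf_on V P" and L: "L \<ge> 1"
  shows "(\<forall>l\<in>{1..L+1}. 0 \<le> theta_hg (L+1) l V E P \<and> theta_hg (L+1) l V E P \<le> I_hg (L+1) V E P)
    \<and> (0 \<le> I_hg (L+1) V E P \<and> I_hg (L+1) V E P \<le> renyi (L+1) V P)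
    \<and> (I_hg (L+1) V E P = 0 \<longleftrightarrow>
         \<not> (\<exists>e. e \<subseteq> supp V P \<and> 2 \<le> card e \<and> card e \<le> L+1 \<and> e \<in> E))
    \<and> (I_hg (L+1) V E P = renyi (L+1) V P \<longleftrightarrow>
         (\<forall>e. e \<subseteq> supp V P \<and> 2 \<le> card e \<and> card e \<le> L+1 \<longrightarrow> e \<in> E))
    \<and> (\<forall>n\<ge>2. \<forall>l\<in>{1..L+1}.
         theta_hg (L+1) l (conormal_V V n) (conormal_E V E n) (tprob P) =
           real n * theta_hg (L+1) l V E P)"
proof -
  have m: "2 \<le> L + 1"
    using L by simp
  show ?thesis
    using theta_hg_bounds[OF hg pm m] I_hg_bounds[OF hg pm m] I_hg_eq_0_iff[OF hg pm m]
      I_hg_eq_renyi_iff[OF hg pm m] theta_hg_conormal[OF hg pm m]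
    by simp
qed

end
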